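(* Let $S=\left\{\begin{pmatrix}\alpha&a&b\\0&\alpha&c\\0&0&\alpha\end{pmatrix}:\alpha,a,b,c\in\mathbb C\right\}$, normed by the operator norm of $3\times 3$ matrices acting on $\mathbb C^3$ (Euclidean norm). Let $A$ be $S$ with the multiplication $(\alpha I+M)(\beta I+N)=\alpha\beta I+\alpha N+\beta M$ for strictly upper triangular $M,N$ (the unitization of the strictly upper triangular matrices with zero multiplication), and let $B$ be $S$ with the usual matrix multiplication. Then $A^{-1}=B^{-1}=\{\alpha\neq 0\}$ as sets, the map $T:A^{-1}\to B^{-1}$, $T(M)=M+F$ with $F=\begin{pmatrix}0&0&7\\0&0&0\\0&0&0\end{pmatrix}$, is a well-defined surjective isometry, $A$ is commutative but not semisimple, and $A^{-1}$ is not isomorphic as a group to $B^{-1}$.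
   Context: The metric on $A^{-1}$ and $B^{-1}$ is the one induced by the operator norm. *)

theory Defs
  imports "HOL-Analysis.Analysis" "HOL-Algebra.Group"
begin

type_synonym cmat3 = "complex^3^3"

definition tri :: "complex \<Rightarrow> complex \<Rightarrow> complex \<Rightarrow> complex \<Rightarrow> cmat3" where
  "tri \<alpha> a b c = (\<chi> i j. if i = j then \<alpha>
      else if i = 1 \<and> j = 2 then a
      else if i = 1 \<and> j = 3 then b
      else if i = 2 \<and> j = 3 then c else 0)"

definition S :: "cmat3 set" where
  "S = {tri \<alpha> a b c | \<alpha> a b c. True}"

definition opnorm :: "cmat3 \<Rightarrow> real" where
  "opnorm M = onorm (\<lambda>v::complex^3. M *v v)"

definition diagc :: "cmat3 \<Rightarrow> complex" where
  "diagc X = X $ 1 $ 1"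

definition strictpart :: "cmat3 \<Rightarrow> cmat3" where
  "strictpart X = X - mat (diagc X)"

definition multA :: "cmat3 \<Rightarrow> cmat3 \<Rightarrow> cmat3" where
  "multA X Y = mat (diagc X * diagc Y)
     + (\<chi> i j. diagc X * strictpart Y $ i $ j + diagc Y * strictpart X $ i $ j)"

definition Ainv :: "cmat3 set" where
  "Ainv = {X \<in> S. \<exists>Y \<in> S. multA X Y = mat 1 \<and> multA Y X = mat 1}"

definition Binv :: "cmat3 set" where
  "Binv = {X \<in> S. \<exists>Y \<in> S. X ** Y = mat 1 \<and> Y ** X = mat 1}"

definition Fmat :: cmat3 where
  "Fmat = tri 0 0 7 0"

definition Tmap :: "cmat3 \<Rightarrow> cmat3" where
  "Tmap M = M + Fmat"

definition left_idealA :: "cmat3 set \<Rightarrow> bool" where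
  "left_idealA I \<longleftrightarrow> I \<subseteq> S \<and> 0 \<in> I \<and> (\<forall>x\<in>I. \<forall>y\<in>I. x + y \<in> I) \<and> (\<forall>x\<in>I. - x \<in> I)
     \<and> (\<forall>c::complex. \<forall>x\<in>I. (\<chi> i j. c * x $ i $ j) \<in> I)
     \<and> (\<forall>a\<in>S. \<forall>x\<in>I. multA a x \<in> I)"

definition maximal_left_idealA :: "cmat3 set \<Rightarrow> bool" where
  "maximal_left_idealA I \<longleftrightarrow> left_idealA I \<and> I \<noteq> S
     \<and> (\<forall>J. left_idealA J \<and> J \<noteq> S \<and> I \<subseteq> J \<longrightarrow> J = I)"

definition radA :: "cmat3 set" where
  "radA = \<Inter> {I. maximal_left_idealA I}"

definition groupA :: "cmat3 monoid" where
  "groupA = \<lparr>carrier = Ainv, mult = multA, one = mat 1\<rparr>"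

definition groupB :: "cmat3 monoid" where
  "groupB = \<lparr>carrier = Binv, mult = (**), one = mat 1\<rparr>"

end

theory Submission
  imports Defs
begin

(* Every matrix of S is tri alpha a b c, and in these coordinates both products on S
   are explicit polynomial maps.  The proof therefore first computes everything in
   coordinates and then reads off the seven claims:
   - X is invertible in A, resp. in B, iff alpha <> 0; the inverse is written down
     explicitly (for A one product suffices because multA is commutative);
   - T is a translation, so T X - T Y = X - Y, which gives the isometry property, and
     it fixes the diagonal, which gives T(A^-1) = B^-1;
   - a proper left ideal of A contains no invertible element, hence lies in
     N = {alpha = 0}; N itself is a proper left ideal, so it is the unique maximal
     left ideal and rad A = N, which contains nonzero matrices;
   - group isomorphisms transfer commutativity, A^-1 is commutative, and B^-1 contains
     two non-commuting matrices, so the groups are not isomorphic. *)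

lemma tri_entry: "tri \<alpha> a b c $ i $ j = (if i = j then \<alpha>
      else if i = 1 \<and> j = 2 then a
      else if i = 1 \<and> j = 3 then b
      else if i = 2 \<and> j = 3 then c else 0)"
  by (simp add: tri_def)

lemma tri_eq: "tri \<alpha> a b c = tri \<beta> d e f \<longleftrightarrow> \<alpha> = \<beta> \<and> a = d \<and> b = e \<and> c = f"
  by (auto simp add: vec_eq_iff forall_3 tri_entry)

lemma tri_in_S [simp]: "tri \<alpha> a b c \<in> S"
  by (auto simp: S_def)

lemma S_cases:
  assumes "X \<in> S"
  obtains \<alpha> a b c where "X = tri \<alpha> a b c"
  using assms by (auto simp: S_def)

lemma mat_tri: "mat x = tri x 0 0 0"
  by (simp add: vec_eq_iff forall_3 tri_entry mat_def)

lemma zero_tri: "(0::cmat3) = tri 0 0 0 0"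
  by (simp add: vec_eq_iff forall_3 tri_entry)

lemma diagc_tri [simp]: "diagc (tri \<alpha> a b c) = \<alpha>"
  by (simp add: diagc_def tri_entry)

lemma add_tri: "tri \<alpha> a b c + tri \<beta> d e f = tri (\<alpha> + \<beta>) (a + d) (b + e) (c + f)"
  by (simp add: vec_eq_iff forall_3 tri_entry)

lemma neg_tri: "- tri \<alpha> a b c = tri (- \<alpha>) (- a) (- b) (- c)"
  by (simp add: vec_eq_iff forall_3 tri_entry)

lemma scale_tri: "(\<chi> i j. k * tri \<alpha> a b c $ i $ j) = tri (k * \<alpha>) (k * a) (k * b) (k * c)"
  by (simp add: vec_eq_iff forall_3 tri_entry)

lemma matmult_tri:
  "tri \<alpha> a b c ** tri \<beta> d e f
     = tri (\<alpha> * \<beta>) (\<alpha> * d + a * \<beta>) (\<alpha> * e + a * f + b * \<beta>) (\<alpha> * f + c * \<beta>)"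
  by (simp add: vec_eq_iff forall_3 tri_entry matrix_matrix_mult_def sum_3)

lemma strictpart_tri: "strictpart (tri \<alpha> a b c) = tri 0 a b c"
  by (simp add: strictpart_def vec_eq_iff forall_3 tri_entry mat_def)

lemma multA_tri:
  "multA (tri \<alpha> a b c) (tri \<beta> d e f)
     = tri (\<alpha> * \<beta>) (\<alpha> * d + \<beta> * a) (\<alpha> * e + \<beta> * b) (\<alpha> * f + \<beta> * c)"
  by (simp add: multA_def strictpart_tri vec_eq_iff forall_3 tri_entry mat_def)

lemma multA_comm: "multA X Y = multA Y X"
  by (simp add: multA_def mult.commute add.commute)

lemma multA_one_right: "X \<in> S \<Longrightarrow> multA X (mat 1) = X"
  by (auto elim: S_cases simp: mat_tri multA_tri)

lemma multA_inverse:
  assumes "\<alpha> \<noteq> 0"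
  shows "multA (tri \<alpha> a b c) (tri (1/\<alpha>) (- a/\<alpha>^2) (- b/\<alpha>^2) (- c/\<alpha>^2)) = mat 1"
  using assms by (simp add: multA_tri mat_tri tri_eq field_simps power2_eq_square)

lemma matmult_inverse:
  fixes \<alpha> a b c :: complex
  assumes "\<alpha> \<noteq> 0"
  defines "Y \<equiv> tri (1/\<alpha>) (- a/\<alpha>^2) ((a * c - \<alpha> * b)/\<alpha>^3) (- c/\<alpha>^2)"
  shows "tri \<alpha> a b c ** Y = mat 1" and "Y ** tri \<alpha> a b c = mat 1"
  using assms by (simp_all add: Y_def matmult_tri mat_tri tri_eq field_simps
      power2_eq_square power3_eq_cube)

(* In both algebras the diagonal entry is multiplicative, so an invertible element
   must have nonzero diagonal; the explicit inverses give the converse. *)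
lemma Ainv_eq: "Ainv = {X \<in> S. diagc X \<noteq> 0}"
proof (rule Set.set_eqI, rule iffI)
  fix X assume "X \<in> Ainv"
  then obtain Y where "X \<in> S" "Y \<in> S" "multA X Y = mat 1"
    by (auto simp: Ainv_def)
  then show "X \<in> {X \<in> S. diagc X \<noteq> 0}"
    by (auto elim!: S_cases simp: multA_tri mat_tri tri_eq)
next
  fix X assume "X \<in> {X \<in> S. diagc X \<noteq> 0}"
  then obtain \<alpha> a b c where X: "X = tri \<alpha> a b c" and "\<alpha> \<noteq> 0"
    by (auto elim: S_cases)
  define Y where "Y = tri (1/\<alpha>) (- a/\<alpha>^2) (- b/\<alpha>^2) (- c/\<alpha>^2)"
  have XY: "multA X Y = mat 1"
    unfolding X Y_def by (rule multA_inverse[OF \<open>\<alpha> \<noteq> 0\<close>])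
  moreover have "multA Y X = mat 1"
    using XY by (simp only: multA_comm)
  ultimately show "X \<in> Ainv"
    unfolding Ainv_def using X Y_def tri_in_S by blast
qed

lemma Binv_eq: "Binv = {X \<in> S. diagc X \<noteq> 0}"
proof (rule Set.set_eqI, rule iffI)
  fix X assume "X \<in> Binv"
  then obtain Y where "X \<in> S" "Y \<in> S" "X ** Y = mat 1"
    by (auto simp: Binv_def)
  then show "X \<in> {X \<in> S. diagc X \<noteq> 0}"
    by (auto elim!: S_cases simp: matmult_tri mat_tri tri_eq)
next
  fix X assume "X \<in> {X \<in> S. diagc X \<noteq> 0}"
  then obtain \<alpha> a b c where X: "X = tri \<alpha> a b c" and "\<alpha> \<noteq> 0"
    by (auto elim: S_cases)
  then show "X \<in> Binv"
    unfolding Binv_def using matmult_inverse tri_in_S by blast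
qed

lemma Tmap_tri: "Tmap (tri \<alpha> a b c) = tri \<alpha> a (b + 7) c"
  by (simp add: Tmap_def Fmat_def add_tri)

(* T is a translation, so it preserves differences and hence every distance
   defined from a norm, in particular the one given by the operator norm. *)
lemma Tmap_diff: "Tmap X - Tmap Y = X - Y"
  by (simp add: Tmap_def)

(* T maps S onto S, keeps the diagonal and is inverted by the opposite translation. *)
lemma Tmap_image: "Tmap ` Ainv = Binv"
proof (rule Set.set_eqI, rule iffI)
  fix Z assume "Z \<in> Tmap ` Ainv"
  then show "Z \<in> Binv"
    unfolding Ainv_eq Binv_eq by (auto elim!: S_cases simp: Tmap_tri)
next
  fix Z assume "Z \<in> Binv"
  then obtain \<alpha> a b c where Z: "Z = tri \<alpha> a b c" and "\<alpha> \<noteq> 0"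
    unfolding Binv_eq by (auto elim: S_cases)
  then have "tri \<alpha> a (b - 7) c \<in> Ainv" and "Z = Tmap (tri \<alpha> a (b - 7) c)"
    by (simp_all add: Ainv_eq Tmap_tri)
  then show "Z \<in> Tmap ` Ainv" by blast
qed

definition Nset :: "cmat3 set" where
  "Nset = {X \<in> S. diagc X = 0}"

lemma Nset_left_ideal: "left_idealA Nset"
  unfolding left_idealA_def Nset_def
  by (auto elim!: S_cases simp: zero_tri add_tri neg_tri scale_tri multA_tri)

lemma Nset_proper: "Nset \<noteq> S"
proof
  assume "Nset = S"
  then have "tri 1 0 0 0 \<in> Nset" by simp
  then show False by (simp add: Nset_def)
qed

(* A left ideal containing an invertible element contains the unit and hence all of S;
   so a proper left ideal consists of non-invertible elements, i.e. lies in Nset. *)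
lemma proper_left_ideal_subset_Nset:
  assumes I: "left_idealA I" and proper: "I \<noteq> S"
  shows "I \<subseteq> Nset"
proof
  fix X assume XI: "X \<in> I"
  show "X \<in> Nset"
  proof (rule ccontr)
    assume "X \<notin> Nset"
    with I XI have "X \<in> Ainv" by (auto simp: left_idealA_def Nset_def Ainv_eq)
    then obtain Y where "Y \<in> S" "multA Y X = mat 1" by (auto simp: Ainv_def)
    with I XI have one: "mat 1 \<in> I" unfolding left_idealA_def by metis
    have "S \<subseteq> I"
    proof
      fix Z assume "Z \<in> S"
      with one I have "multA Z (mat 1) \<in> I" by (simp add: left_idealA_def)
      with \<open>Z \<in> S\<close> show "Z \<in> I" by (simp add: multA_one_right)
    qed
    with I proper show False by (auto simp: left_idealA_def)
  qed
qed

lemma maximal_left_idealA_iff: "maximal_left_idealA I \<longleftrightarrow> I = Nset"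
  using proper_left_ideal_subset_Nset Nset_left_ideal Nset_proper
  unfolding maximal_left_idealA_def by blast

lemma radA_eq: "radA = Nset"
  by (simp add: radA_def maximal_left_idealA_iff)

lemma radA_nontrivial: "radA \<noteq> {0}"
proof -
  have "tri 0 1 0 0 \<in> radA" by (simp add: radA_eq Nset_def)
  moreover have "tri 0 1 0 0 \<noteq> (0::cmat3)" by (simp add: zero_tri tri_eq)
  ultimately show ?thesis by blast
qed

lemma iso_transfers_commutativity:
  assumes "G \<cong> H"
    and comm: "\<And>x y. x \<in> carrier G \<Longrightarrow> y \<in> carrier G \<Longrightarrow> x \<otimes>\<^bsub>G\<^esub> y = y \<otimes>\<^bsub>G\<^esub> x"
    and "u \<in> carrier H" "v \<in> carrier H"
  shows "u \<otimes>\<^bsub>H\<^esub> v = v \<otimes>\<^bsub>H\<^esub> u"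
proof -
  obtain h where h: "h \<in> hom G H" "h ` carrier G = carrier H"
    using assms(1) by (auto simp: is_iso_def iso_iff)
  obtain x y where x: "x \<in> carrier G" "u = h x" and y: "y \<in> carrier G" "v = h y"
    using assms(3,4) h(2) by blast
  have "u \<otimes>\<^bsub>H\<^esub> v = h (x \<otimes>\<^bsub>G\<^esub> y)" using h(1) x y by (simp add: hom_mult)
  also have "\<dots> = h (y \<otimes>\<^bsub>G\<^esub> x)" using comm x y by simp
  also have "\<dots> = v \<otimes>\<^bsub>H\<^esub> u" using h(1) x y by (simp add: hom_mult)
  finally show ?thesis .
qed

(* B^-1 is not commutative: the elementary matrices for the entries (1,2) and (2,3)
   do not commute, since only one order produces a nonzero (1,3) entry. *)
lemma groupB_noncommutative:
  "tri 1 1 0 0 \<in> Binv" "tri 1 0 0 1 \<in> Binv"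
  "tri 1 1 0 0 ** tri 1 0 0 1 \<noteq> tri 1 0 0 1 ** tri 1 1 0 0"
  by (simp_all add: Binv_eq matmult_tri tri_eq)

lemma groups_not_isomorphic: "\<not> (groupA \<cong> groupB)"
proof
  assume "groupA \<cong> groupB"
  moreover have "\<And>x y. multA x y = multA y x"
    by (rule multA_comm)
  ultimately have "tri 1 1 0 0 ** tri 1 0 0 1 = tri 1 0 0 1 ** tri 1 1 0 0"
    using iso_transfers_commutativity[of groupA groupB "tri 1 1 0 0" "tri 1 0 0 1"]
      groupB_noncommutative(1,2)
    unfolding groupA_def groupB_def by simp
  with groupB_noncommutative(3) show False by blast
qed

theorem mainTheorem6:
  shows "Ainv = {X \<in> S. diagc X \<noteq> 0}
    \<and> Binv = {X \<in> S. diagc X \<noteq> 0}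
    \<and> Tmap ` Ainv = Binv
    \<and> (\<forall>X\<in>Ainv. \<forall>Y\<in>Ainv. opnorm (Tmap X - Tmap Y) = opnorm (X - Y))
    \<and> (\<forall>X\<in>S. \<forall>Y\<in>S. multA X Y = multA Y X)
    \<and> radA \<noteq> {0}
    \<and> \<not> (groupA \<cong> groupB)"
  using Ainv_eq Binv_eq Tmap_image Tmap_diff multA_comm radA_nontrivial groups_not_isomorphic
  by simp

end
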